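(* Let $A\in\mathbb{R}^{m\times N}$ and $K,S\subset[N]$. Suppose $\mathbb{1}_K$ is the unique solution of $$\min\|x\|_1\ \text{subject to}\ Ax=b,\ x\in[0,1]^N \qquad (P_{\mathrm{bin}})$$ with $b=A\mathbb{1}_K$, and $\mathbb{1}_S$ is the unique solution of $(P_{\mathrm{bin}})$ with $b=A\mathbb{1}_S$. Then $\ker(A)\cap H_K\cap H_{S^c}=\{0\}$.
   Context: $[N]=\{1,\dots,N\}$; $\mathbb{1}_K\in\{0,1\}^N$ denotes the indicator vector of $K$, and $S^c=[N]\setminus S$. For $K\subset[N]$, $H_K=\{w\in\mathbb{R}^N: w_i\le 0 \text{ for } i\in K,\ w_i\ge 0 \text{ for } i\notin K\}$. *)

theory Defs
  imports "HOL-Analysis.Analysis"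
begin

text \<open>Index set [N] is the finite type 'n; the matrix A has rows indexed by 'm.\<close>

definition ind_vec :: "'n::finite set \<Rightarrow> real ^ 'n" where
  "ind_vec K = (\<chi> i. if i \<in> K then 1 else 0)"

definition l1norm :: "real ^ 'n::finite \<Rightarrow> real" where
  "l1norm x = (\<Sum>i\<in>UNIV. \<bar>x $ i\<bar>)"

definition feasible_bin :: "real ^ 'n::finite ^ 'm::finite \<Rightarrow> real ^ 'm \<Rightarrow> real ^ 'n \<Rightarrow> bool" where
  "feasible_bin A b x \<longleftrightarrow> A *v x = b \<and> (\<forall>i. 0 \<le> x $ i \<and> x $ i \<le> 1)"

definition unique_sol_bin :: "real ^ 'n::finite ^ 'm::finite \<Rightarrow> real ^ 'm \<Rightarrow> real ^ 'n \<Rightarrow> bool" where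
  "unique_sol_bin A b x \<longleftrightarrow> feasible_bin A b x \<and>
     (\<forall>y. feasible_bin A b y \<and> y \<noteq> x \<longrightarrow> l1norm x < l1norm y)"

definition kernel_mat :: "real ^ 'n::finite ^ 'm::finite \<Rightarrow> (real ^ 'n) set" where
  "kernel_mat A = {w. A *v w = 0}"

definition H_set :: "'n::finite set \<Rightarrow> (real ^ 'n) set" where
  "H_set K = {w. (\<forall>i\<in>K. w $ i \<le> 0) \<and> (\<forall>i. i \<notin> K \<longrightarrow> w $ i \<ge> 0)}"

end

theory Submission
  imports Defs
begin

text \<open>If a nonzero w in the kernel lay in both cones, then for small t > 0 the points
  ind_vec K + t w and ind_vec S - t w would both be feasible competitors; since the
  l1-norm is linear on the unit cube, uniqueness of the two solutions forces both the
  coordinate sum of t w and that of -t w to be positive, which is absurd.\<close>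

lemma l1norm_nonneg_coords:
  assumes "\<And>i. 0 \<le> x $ i"
  shows "l1norm x = (\<Sum>i\<in>UNIV. x $ i)"
  unfolding l1norm_def using assms by simp

lemma unique_sol_bin_kernel_sum_pos:
  fixes A :: "real ^ 'n::finite ^ 'm::finite"
  assumes sol: "unique_sol_bin A (A *v c) c"
    and ker: "A *v d = 0" and "d \<noteq> 0"
    and box: "\<And>i. 0 \<le> (c + d) $ i \<and> (c + d) $ i \<le> 1"
  shows "(\<Sum>i\<in>UNIV. d $ i) > 0"
proof -
  have "feasible_bin A (A *v c) (c + d)"
    unfolding feasible_bin_def using ker box by (simp add: matrix_vector_right_distrib)
  with sol \<open>d \<noteq> 0\<close> have "l1norm c < l1norm (c + d)"
    unfolding unique_sol_bin_def by simp
  moreover have "\<And>i. 0 \<le> c $ i"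
    using sol unfolding unique_sol_bin_def feasible_bin_def by blast
  ultimately show ?thesis
    using box by (simp add: l1norm_nonneg_coords sum.distrib)
qed

lemma H_set_Compl: "w \<in> H_set (- S) \<longleftrightarrow> - w \<in> H_set S"
  unfolding H_set_def by auto

lemma ind_vec_add_H_set_in_unit_box:
  assumes "w \<in> H_set K" and "\<And>i. \<bar>w $ i\<bar> \<le> 1"
  shows "0 \<le> (ind_vec K + w) $ i \<and> (ind_vec K + w) $ i \<le> 1"
  using assms(1) assms(2)[of i] unfolding H_set_def ind_vec_def
  by (cases "i \<in> K") auto

lemma exists_scale_into_unit_box:
  fixes w :: "real ^ 'n::finite"
  obtains t where "t > 0" and "\<And>i. \<bar>(t *\<^sub>R w) $ i\<bar> \<le> 1"
proof -
  define t where "t = 1 / (1 + l1norm w)"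
  have norm_nonneg: "0 \<le> l1norm w"
    unfolding l1norm_def by (simp add: sum_nonneg)
  have "\<bar>(t *\<^sub>R w) $ i\<bar> \<le> 1" for i
  proof -
    have "\<bar>w $ i\<bar> \<le> l1norm w"
      unfolding l1norm_def by (rule member_le_sum) auto
    then have "\<bar>w $ i\<bar> / (1 + l1norm w) \<le> 1"
      using norm_nonneg by simp
    then show ?thesis
      using norm_nonneg by (simp add: t_def abs_mult)
  qed
  moreover have "t > 0"
    using norm_nonneg by (simp add: t_def)
  ultimately show thesis
    using that by blast
qed

lemma unique_ind_vec_kernel_H_set_sum_pos:
  fixes A :: "real ^ 'n::finite ^ 'm::finite"
  assumes "unique_sol_bin A (A *v ind_vec K) (ind_vec K)"
    and "A *v w = 0" and "w \<in> H_set K" and "w \<noteq> 0"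
  shows "(\<Sum>i\<in>UNIV. w $ i) > 0"
proof -
  obtain t where "t > 0" and small: "\<And>i. \<bar>(t *\<^sub>R w) $ i\<bar> \<le> 1"
    using exists_scale_into_unit_box[of w] by blast
  have "t *\<^sub>R w \<in> H_set K"
    using \<open>w \<in> H_set K\<close> \<open>t > 0\<close> unfolding H_set_def
    by (auto simp: mult_nonneg_nonpos)
  then have box: "0 \<le> (ind_vec K + t *\<^sub>R w) $ i \<and> (ind_vec K + t *\<^sub>R w) $ i \<le> 1" for i
    using small by (rule ind_vec_add_H_set_in_unit_box)
  have "A *v (t *\<^sub>R w) = 0" "t *\<^sub>R w \<noteq> 0"
    using assms(2,4) \<open>t > 0\<close> by (simp_all add: matrix_vector_mult_scaleR)
  then have "(\<Sum>i\<in>UNIV. (t *\<^sub>R w) $ i) > 0"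
    using box by (rule unique_sol_bin_kernel_sum_pos[OF assms(1)])
  with \<open>t > 0\<close> show ?thesis
    by (simp add: sum_distrib_left[symmetric] zero_less_mult_iff)
qed

lemma matrix_vector_mult_minus:
  fixes A :: "'a::ring_1 ^ 'n::finite ^ 'm::finite"
  shows "A *v (- x) = - (A *v x)"
  using matrix_vector_mult_diff_distrib[of A 0 x] by simp

theorem theorem2p2:
  fixes A :: "real ^ 'n::finite ^ 'm::finite" and K S :: "'n set"
  assumes "unique_sol_bin A (A *v ind_vec K) (ind_vec K)"
    and "unique_sol_bin A (A *v ind_vec S) (ind_vec S)"
  shows "kernel_mat A \<inter> H_set K \<inter> H_set (- S) = {0}"
proof -
  have "w = 0" if "A *v w = 0" "w \<in> H_set K" "w \<in> H_set (- S)" for w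
  proof (rule ccontr)
    assume "w \<noteq> 0"
    have "(\<Sum>i\<in>UNIV. w $ i) > 0"
      using assms(1) that(1,2) \<open>w \<noteq> 0\<close> by (rule unique_ind_vec_kernel_H_set_sum_pos)
    moreover have "(\<Sum>i\<in>UNIV. (- w) $ i) > 0"
      using assms(2) that \<open>w \<noteq> 0\<close>
      by (intro unique_ind_vec_kernel_H_set_sum_pos)
         (auto simp: H_set_Compl matrix_vector_mult_minus)
    ultimately show False
      by (simp add: sum_negf)
  qed
  then show ?thesis
    unfolding kernel_mat_def H_set_def by auto
qed

end
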